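(* Let $S_1,\ldots,S_m$ be formulas ($m\ge1$). The doxastic states $\emptyset[S_1,S_2,\ldots,S_m]$ and $\emptyset[S_2,\ldots,S_m]$ coincide if and only if $S_1$ is equivalent to the disjunction of some (possibly none) Q-combinations of $S_2,\ldots,S_m$.
   Context: Propositional models are truth assignments over a finite set of variables; a formula used where a set of models is expected stands for its set of models. A doxastic state is a sequence $[C(0),\ldots,C(k)]$ of nonempty, pairwise disjoint sets of models covering all models; two doxastic states coincide when they are equal. The flat doxastic state $\emptyset$ is $[\text{all models}]$. Lexicographic revision: $C\,\mathrm{lex}(A) = [C(0)\cap A,\ldots,C(k)\cap A, C(0)\setminus A,\ldots,C(k)\setminus A]$, empty sets discarded. $\emptyset[S_1,\ldots,S_m]$ denotes $\emptyset$ revised lexicographically by $S_1$, then $S_2$, ..., then $S_m$. A Q-combination of formulas $T_1,\ldots,T_n$ is a formula $(B_1\equiv T_1)\wedge\cdots\wedge(B_n\equiv T_n)$ with each $B_i\in\{\mathsf{true},\mathsf{false}\}$. The empty disjunction is $\mathsf{false}$. *)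

theory Defs
  imports Main
begin

datatype 'v fm = Var 'v | TT | FF | Neg "'v fm" | And "'v fm" "'v fm"
  | Or "'v fm" "'v fm" | Iff "'v fm" "'v fm"

type_synonym 'v model = "'v \<Rightarrow> bool"

fun eval :: "'v model \<Rightarrow> 'v fm \<Rightarrow> bool" where
  "eval a (Var x) = a x"
| "eval a TT = True"
| "eval a FF = False"
| "eval a (Neg f) = (\<not> eval a f)"
| "eval a (And f g) = (eval a f \<and> eval a g)"
| "eval a (Or f g) = (eval a f \<or> eval a g)"
| "eval a (Iff f g) = (eval a f \<longleftrightarrow> eval a g)"

definition models :: "'v fm \<Rightarrow> 'v model set" where
  "models f = {a. eval a f}"

type_synonym 'v doxstate = "'v model set list"

definition lex :: "'v doxstate \<Rightarrow> 'v model set \<Rightarrow> 'v doxstate" where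
  "lex C A = filter (\<lambda>X. X \<noteq> {}) (map (\<lambda>X. X \<inter> A) C @ map (\<lambda>X. X - A) C)"

definition flat :: "'v doxstate" where
  "flat = [UNIV]"

definition revise_seq :: "'v fm list \<Rightarrow> 'v doxstate" where
  "revise_seq Ss = foldl (\<lambda>C S. lex C (models S)) flat Ss"

definition qcomb :: "bool list \<Rightarrow> 'v fm list \<Rightarrow> 'v fm" where
  "qcomb Bs Ts = foldr And (map (\<lambda>(b, T). Iff (if b then TT else FF) T) (zip Bs Ts)) TT"

definition is_qcomb :: "'v fm \<Rightarrow> 'v fm list \<Rightarrow> bool" where
  "is_qcomb q Ts \<longleftrightarrow> (\<exists>Bs. length Bs = length Ts \<and> q = qcomb Bs Ts)"

definition disj :: "'v fm list \<Rightarrow> 'v fm" where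
  "disj fs = foldr Or fs FF"

end

theory Submission
  imports Defs
begin

text \<open>
  A doxastic state is an ordered partition of the models, and lexicographic revision by A is its
  ordered meet with [A, -A], the new partition being the more significant one. This meet is
  associative, so revising any state C by S2, ..., Sm yields the meet of C with
  \<emptyset>[S2, ..., Sm], whose nonempty blocks are the classes of models agreeing on the truth
  values of S2, ..., Sm, i.e. the models of the Q-combinations. Hence \<emptyset>[S1, ..., Sm]
  arises from \<emptyset>[S2, ..., Sm] by splitting every class along S1; since a split strictly
  increases the number of nonempty blocks, the two states coincide iff no class is split, i.e. iff
  S1 is a union of classes.
\<close>

definition meet :: "'a set list \<Rightarrow> 'a set list \<Rightarrow> 'a set list" where
  "meet C D = concat (map (\<lambda>B. map (\<lambda>X. X \<inter> B) C) D)"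

lemma meet_Nil_right [simp]: "meet C [] = []"
  by (simp add: meet_def)

lemma meet_Cons_right: "meet C (B # D) = map (\<lambda>X. X \<inter> B) C @ meet C D"
  by (simp add: meet_def)

lemma meet_UNIV_left [simp]: "meet [UNIV] D = D"
  by (induction D) (auto simp: meet_Cons_right)

lemma meet_UNIV_right [simp]: "meet C [UNIV] = C"
  by (simp add: meet_Cons_right)

lemma set_meet: "set (meet C D) = {X \<inter> B |X B. X \<in> set C \<and> B \<in> set D}"
  by (auto simp: meet_def)

lemma meet_append_right: "meet C (D @ E) = meet C D @ meet C E"
  by (simp add: meet_def)

lemma map_Int_meet: "map (\<lambda>X. X \<inter> B) (meet C D) = meet C (map (\<lambda>X. X \<inter> B) D)"
  by (induction D) (auto simp: meet_Cons_right Int_assoc)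

lemma meet_assoc: "meet (meet C D) E = meet C (meet D E)"
  by (induction E) (auto simp: meet_Cons_right map_Int_meet meet_append_right)

lemma filter_nonempty_meet:
  "filter (\<lambda>X. X \<noteq> {}) (meet (filter (\<lambda>X. X \<noteq> {}) C) D) = filter (\<lambda>X. X \<noteq> {}) (meet C D)"
proof (induction D)
  case (Cons B D)
  have "filter (\<lambda>X. X \<noteq> {} \<and> X \<inter> B \<noteq> {}) C = filter (\<lambda>X. X \<inter> B \<noteq> {}) C"
    by (rule filter_cong) auto
  with Cons show ?case
    by (simp add: meet_Cons_right filter_map comp_def)
qed simp

lemma lex_eq_meet: "lex C A = filter (\<lambda>X. X \<noteq> {}) (meet C [A, - A])"
  by (simp add: lex_def meet_Cons_right Diff_eq)

fun blocks :: "'v fm list \<Rightarrow> 'v doxstate" where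
  "blocks [] = [UNIV]"
| "blocks (S # Ss) = meet [models S, - models S] (blocks Ss)"

lemma foldl_meet_eq_meet_blocks:
  "foldl (\<lambda>C S. meet C [models S, - models S]) C Ss = meet C (blocks Ss)"
proof (induction Ss arbitrary: C)
  case Nil
  show ?case by simp
next
  case (Cons S Ss)
  then show ?case by (simp add: meet_assoc)
qed

lemma revise_seq_eq_blocks: "revise_seq Ss = filter (\<lambda>X. X \<noteq> {}) (blocks Ss)"
proof -
  have "foldl (\<lambda>C S. lex C (models S)) (filter (\<lambda>X. X \<noteq> {}) C) Ss
      = filter (\<lambda>X. X \<noteq> {}) (foldl (\<lambda>C S. meet C [models S, - models S]) C Ss)" for C
    by (induction Ss arbitrary: C) (simp_all add: lex_eq_meet filter_nonempty_meet)
  from this[of "[UNIV]"] show ?thesis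
    by (simp add: revise_seq_def flat_def foldl_meet_eq_meet_blocks)
qed

definition signature :: "'v fm list \<Rightarrow> 'v model \<Rightarrow> bool list" where
  "signature Ss w = map (\<lambda>S. eval w S) Ss"

lemma signature_Cons [simp]: "signature (S # Ss) w = eval w S # signature Ss w"
  by (simp add: signature_def)

lemma mem_block_iff_signature_eq:
  assumes "B \<in> set (blocks Ss)" and "w \<in> B"
  shows "w' \<in> B \<longleftrightarrow> signature Ss w' = signature Ss w"
  using assms
proof (induction Ss arbitrary: B)
  case Nil
  then show ?case by (simp add: signature_def)
next
  case (Cons S Ss)
  then obtain X B\<^sub>0 where "B = X \<inter> B\<^sub>0" "X = models S \<or> X = - models S" "B\<^sub>0 \<in> set (blocks Ss)"
    by (auto simp: set_meet)
  with Cons.prems Cons.IH show ?case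
    by (auto simp: models_def)
qed

lemma blocks_cover: "\<exists>B\<in>set (blocks Ss). w \<in> B"
proof (induction Ss)
  case Nil
  show ?case by simp
next
  case (Cons S Ss)
  then obtain B where B: "B \<in> set (blocks Ss)" "w \<in> B" by blast
  define X where "X = (if w \<in> models S then models S else - models S)"
  have "X \<in> set [models S, - models S]" "w \<in> X"
    by (simp_all add: X_def)
  with B have "X \<inter> B \<in> set (blocks (S # Ss))" "w \<in> X \<inter> B"
    by (auto simp: set_meet)
  then show ?case by blast
qed

lemma blocks_not_split_iff:
  "(\<forall>B\<in>set (blocks Ss). B \<subseteq> A \<or> A \<inter> B = {})
    \<longleftrightarrow> (\<forall>w w'. signature Ss w = signature Ss w' \<longrightarrow> (w \<in> A \<longleftrightarrow> w' \<in> A))"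
proof
  assume not_split: "\<forall>B\<in>set (blocks Ss). B \<subseteq> A \<or> A \<inter> B = {}"
  show "\<forall>w w'. signature Ss w = signature Ss w' \<longrightarrow> (w \<in> A \<longleftrightarrow> w' \<in> A)"
  proof (intro allI impI)
    fix w w'
    assume same: "signature Ss w = signature Ss w'"
    obtain B where B: "B \<in> set (blocks Ss)" and w: "w \<in> B"
      using blocks_cover by blast
    have "w' \<in> B"
      using mem_block_iff_signature_eq[OF B w, of w'] same by simp
    moreover have "B \<subseteq> A \<or> A \<inter> B = {}"
      using not_split B by blast
    ultimately show "w \<in> A \<longleftrightarrow> w' \<in> A"
      using w by blast
  qed
next
  assume saturated: "\<forall>w w'. signature Ss w = signature Ss w' \<longrightarrow> (w \<in> A \<longleftrightarrow> w' \<in> A)"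
  show "\<forall>B\<in>set (blocks Ss). B \<subseteq> A \<or> A \<inter> B = {}"
  proof
    fix B
    assume B: "B \<in> set (blocks Ss)"
    have "w \<in> A \<longleftrightarrow> w' \<in> A" if "w \<in> B" "w' \<in> B" for w w'
    proof -
      have "signature Ss w' = signature Ss w"
        using mem_block_iff_signature_eq[OF B that(1), of w'] that(2) by simp
      with saturated show ?thesis by blast
    qed
    then show "B \<subseteq> A \<or> A \<inter> B = {}" by blast
  qed
qed

lemma length_filter_nonempty_meet_split:
  "length (filter (\<lambda>X. X \<noteq> {}) Bl)
    \<le> length (filter (\<lambda>X. X \<noteq> {}) (meet [A, - A] Bl))"
  by (induction Bl) (auto simp: meet_Cons_right)

lemma length_filter_nonempty_meet_split_less:
  assumes "B \<in> set Bl" and "A \<inter> B \<noteq> {}" and "\<not> B \<subseteq> A"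
  shows "length (filter (\<lambda>X. X \<noteq> {}) Bl)
    < length (filter (\<lambda>X. X \<noteq> {}) (meet [A, - A] Bl))"
  using assms
proof (induction Bl)
  case (Cons B' Bl)
  show ?case
  proof (cases "B' = B")
    case True
    with Cons.prems have "A \<inter> B \<noteq> {}" "- A \<inter> B \<noteq> {}" by auto
    with True length_filter_nonempty_meet_split[of Bl A] show ?thesis
      by (auto simp: meet_Cons_right)
  next
    case False
    with Cons have "length (filter (\<lambda>X. X \<noteq> {}) Bl)
        < length (filter (\<lambda>X. X \<noteq> {}) (meet [A, - A] Bl))" by simp
    then show ?thesis by (auto simp: meet_Cons_right)
  qed
qed simp

lemma filter_nonempty_meet_split_eq_iff:
  "filter (\<lambda>X. X \<noteq> {}) (meet [A, - A] Bl) = filter (\<lambda>X. X \<noteq> {}) Bl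
    \<longleftrightarrow> (\<forall>B\<in>set Bl. B \<subseteq> A \<or> A \<inter> B = {})"
proof
  assume "filter (\<lambda>X. X \<noteq> {}) (meet [A, - A] Bl) = filter (\<lambda>X. X \<noteq> {}) Bl"
  then show "\<forall>B\<in>set Bl. B \<subseteq> A \<or> A \<inter> B = {}"
    using length_filter_nonempty_meet_split_less[of _ Bl A] by fastforce
next
  assume "\<forall>B\<in>set Bl. B \<subseteq> A \<or> A \<inter> B = {}"
  then show "filter (\<lambda>X. X \<noteq> {}) (meet [A, - A] Bl) = filter (\<lambda>X. X \<noteq> {}) Bl"
  proof (induction Bl)
    case (Cons B Bl)
    from Cons.prems consider "A \<inter> B = B" "- A \<inter> B = {}" | "A \<inter> B = {}" "- A \<inter> B = B"
      by auto
    then have B: "filter (\<lambda>X. X \<noteq> {}) [A \<inter> B, - A \<inter> B] = filter (\<lambda>X. X \<noteq> {}) [B]"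
      by cases auto
    from Cons have Bl: "filter (\<lambda>X. X \<noteq> {}) (meet [A, - A] Bl) = filter (\<lambda>X. X \<noteq> {}) Bl"
      by simp
    have "filter (\<lambda>X. X \<noteq> {}) (meet [A, - A] (B # Bl))
        = filter (\<lambda>X. X \<noteq> {}) [A \<inter> B, - A \<inter> B] @ filter (\<lambda>X. X \<noteq> {}) (meet [A, - A] Bl)"
      by (simp add: meet_Cons_right)
    also have "\<dots> = filter (\<lambda>X. X \<noteq> {}) [B] @ filter (\<lambda>X. X \<noteq> {}) Bl"
      by (simp only: B Bl)
    also have "\<dots> = filter (\<lambda>X. X \<noteq> {}) (B # Bl)"
      by simp
    finally show ?case .
  qed simp
qed

lemma models_qcomb:
  "length Bs = length Ss \<Longrightarrow> models (qcomb Bs Ss) = {w. signature Ss w = Bs}"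
proof (induction Ss arbitrary: Bs)
  case Nil
  then show ?case by (simp add: qcomb_def models_def signature_def)
next
  case (Cons S Ss)
  then obtain b Bs' where "Bs = b # Bs'" "length Bs' = length Ss"
    by (cases Bs) auto
  with Cons.IH show ?case
    by (auto simp: qcomb_def models_def)
qed

lemma models_disj: "models (disj Q) = (\<Union>q\<in>set Q. models q)"
  by (induction Q) (auto simp: disj_def models_def)

lemma models_disj_qcomb_iff:
  "(\<exists>Q. (\<forall>q\<in>set Q. is_qcomb q Ss) \<and> A = models (disj Q))
    \<longleftrightarrow> (\<forall>w w'. signature Ss w = signature Ss w' \<longrightarrow> (w \<in> A \<longleftrightarrow> w' \<in> A))"
  (is "?disj \<longleftrightarrow> ?saturated")
proof
  assume ?disj
  then obtain Q where Q: "\<forall>q\<in>set Q. is_qcomb q Ss" and A: "A = models (disj Q)"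
    by blast
  show ?saturated
  proof (intro allI impI)
    fix w w'
    assume same: "signature Ss w = signature Ss w'"
    have "w \<in> models q \<longleftrightarrow> w' \<in> models q" if "q \<in> set Q" for q
    proof -
      from Q that obtain Bs where "length Bs = length Ss" "q = qcomb Bs Ss"
        by (auto simp: is_qcomb_def)
      then show ?thesis
        using same by (simp add: models_qcomb)
    qed
    then show "w \<in> A \<longleftrightarrow> w' \<in> A"
      unfolding A models_disj by blast
  qed
next
  assume saturated: ?saturated
  define Bss where "Bss = filter (\<lambda>Bs. {w. signature Ss w = Bs} \<subseteq> A)
    (List.n_lists (length Ss) [True, False])"
  have length_Bss: "length Bs = length Ss" if "Bs \<in> set Bss" for Bs
    using that by (simp add: Bss_def set_n_lists)
  define Q where "Q = map (\<lambda>Bs. qcomb Bs Ss) Bss"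
  have "\<forall>q\<in>set Q. is_qcomb q Ss"
    using length_Bss by (auto simp: Q_def is_qcomb_def)
  moreover have "A = models (disj Q)"
  proof (rule set_eqI)
    fix w
    have "signature Ss w \<in> set (List.n_lists (length Ss) [True, False])"
      by (auto simp: set_n_lists signature_def)
    moreover have "w \<in> A \<longleftrightarrow> {w'. signature Ss w' = signature Ss w} \<subseteq> A"
      using saturated by blast
    ultimately have "w \<in> A \<longleftrightarrow> signature Ss w \<in> set Bss"
      by (simp add: Bss_def)
    also have "\<dots> \<longleftrightarrow> (\<exists>Bs\<in>set Bss. w \<in> models (qcomb Bs Ss))"
      by (auto simp: models_qcomb length_Bss)
    also have "\<dots> \<longleftrightarrow> w \<in> models (disj Q)"
      by (simp add: Q_def models_disj)
    finally show "w \<in> A \<longleftrightarrow> w \<in> models (disj Q)" .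
  qed
  ultimately show ?disj by blast
qed

theorem mainTheorem7:
  fixes S1 :: "('v::finite) fm" and Ss :: "'v fm list"
  shows "revise_seq (S1 # Ss) = revise_seq Ss \<longleftrightarrow>
    (\<exists>Q. (\<forall>q\<in>set Q. is_qcomb q Ss) \<and> models S1 = models (disj Q))"
proof -
  have "revise_seq (S1 # Ss) = revise_seq Ss
      \<longleftrightarrow> (\<forall>B\<in>set (blocks Ss). B \<subseteq> models S1 \<or> models S1 \<inter> B = {})"
    by (simp add: revise_seq_eq_blocks filter_nonempty_meet_split_eq_iff)
  also have "\<dots> \<longleftrightarrow> (\<forall>w w'. signature Ss w = signature Ss w'
      \<longrightarrow> (w \<in> models S1 \<longleftrightarrow> w' \<in> models S1))"
    by (rule blocks_not_split_iff)
  also have "\<dots> \<longleftrightarrow> (\<exists>Q. (\<forall>q\<in>set Q. is_qcomb q Ss) \<and> models S1 = models (disj Q))"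
    by (rule models_disj_qcomb_iff[symmetric])
  finally show ?thesis .
qed

end
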